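(* Let $N\geq3$ and $f,s\in\mathbb{R}$. Then $$\mathbb{E}\left[\det\left(W_{N-1}-fe_{N-1}e_{N-1}^T+sI_{N-1}\right)\right]=\mathbb{E}\left[\det(W_{N-1}+sI_{N-1})\right]-f\left(\frac{N-2}{N-1}\right)^{\frac{N-2}{2}}\mathbb{E}\left[\det\left(W_{N-2}+\sqrt{\tfrac{N-1}{N-2}}\,s\,I_{N-2}\right)\right].$$
   Context: For $n\ge1$, $W_n$ denotes the normalized GOE of size $n$: a real symmetric random matrix $(W_{ij})$ with $\{W_{ij}\}_{i\le j}$ independent centered Gaussians, $\mathbb{E}[W_{ij}^2]=1/n$ for $i\ne j$ and $\mathbb{E}[W_{ii}^2]=2/n$. $e_{N-1}$ is the last standard basis vector of $\mathbb{R}^{N-1}$ and $I_n$ the identity. *)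

theory Defs
  imports "HOL-Probability.Probability" "Jordan_Normal_Form.Determinant"
begin

definition goe_index :: "nat \<Rightarrow> (nat \<times> nat) set" where
  "goe_index n = {(i, j). i \<le> j \<and> j < n}"

text \<open>Normalized GOE of size n, as a law of the independent upper-triangular entries:
  centered Gaussians, variance 2/n on the diagonal and 1/n off the diagonal.\<close>
definition goe :: "nat \<Rightarrow> ((nat \<times> nat) \<Rightarrow> real) measure" where
  "goe n = (\<Pi>\<^sub>M ij\<in>goe_index n.
      density lborel (normal_density 0
        (if fst ij = snd ij then sqrt (2 / real n) else sqrt (1 / real n))))"

definition goe_mat :: "nat \<Rightarrow> ((nat \<times> nat) \<Rightarrow> real) \<Rightarrow> real mat" where
  "goe_mat n w = mat n n (\<lambda>(i, j). w (min i j, max i j))"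

end

theory Submission
  imports Defs
begin

(* Expanding along the last column, the perturbation -f e e^T lowers det(W_{N-1} + sI) by f times
   the leading (N-2)-minor, which is det(W' + sI) for the leading (N-2)-block W' of W_{N-1}.
   The entries of W' are centred Gaussians of variances 1/(N-1) and 2/(N-1), so W' has the law of
   c W_{N-2} with c = sqrt((N-2)/(N-1)), whence E det(W' + sI) = c^(N-2) E det(W_{N-2} + (s/c) I).
   All these determinants are integrable, being dominated by polynomials in the Gaussian entries. *)

lemma unit_vec_outer_eq:
  assumes "k < n"
  shows "mat_of_cols n [unit_vec n k] * mat_of_rows n [unit_vec n k]
     = (mat n n (\<lambda>(i, j). if i = k \<and> j = k then 1 else 0) :: 'a :: comm_ring_1 mat)"
  using assms
  by (intro eq_matI) (auto simp: scalar_prod_def unit_vec_def mat_of_cols_def mat_of_rows_def)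

lemma det_minus_smult_unit_outer:
  fixes B :: "'a :: comm_ring_1 mat"
  assumes B: "B \<in> carrier_mat n n" and k: "k < n"
  shows "det (B - f \<cdot>\<^sub>m (mat_of_cols n [unit_vec n k] * mat_of_rows n [unit_vec n k]))
       = det B - f * det (mat_delete B k k)"
proof -
  let ?B' = "B - f \<cdot>\<^sub>m (mat_of_cols n [unit_vec n k] * mat_of_rows n [unit_vec n k])"
  have B': "?B' \<in> carrier_mat n n" using B by auto
  have entry: "?B' $$ (i, k) = B $$ (i, k) - (if i = k then f else 0)" if "i < n" for i
    using B k that by (simp add: unit_vec_outer_eq)
  have minor: "mat_delete ?B' i k = mat_delete B i k" for i
    using B k by (intro eq_matI) (auto simp: mat_delete_def unit_vec_outer_eq)
  have "det ?B' = (\<Sum>i<n. ?B' $$ (i, k) * cofactor ?B' i k)"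
    by (rule laplace_expansion_column[OF B' k])
  also have "\<dots> = (\<Sum>i<n. B $$ (i, k) * cofactor B i k - (if i = k then f * cofactor B k k else 0))"
    by (intro sum.cong refl) (auto simp: entry cofactor_def minor algebra_simps)
  also have "\<dots> = det B - f * det (mat_delete B k k)"
    using k by (simp add: sum_subtractf laplace_expansion_column[OF B k] cofactor_def)
  finally show ?thesis .
qed

lemma abs_det_le_fact_mult_pow:
  fixes A :: "'a :: linordered_idom mat"
  assumes A: "A \<in> carrier_mat n n" and bound: "\<And>i j. i < n \<Longrightarrow> j < n \<Longrightarrow> \<bar>A $$ (i, j)\<bar> \<le> b"
  shows "\<bar>det A\<bar> \<le> fact n * b ^ n"
proof -
  have term_bound: "\<bar>signof p * (\<Prod>i = 0..<n. A $$ (i, p i))\<bar> \<le> b ^ n" if p: "p permutes {0..<n}" for p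
  proof -
    have "\<bar>\<Prod>i = 0..<n. A $$ (i, p i)\<bar> \<le> (\<Prod>i = 0..<n. b)"
      unfolding abs_prod using p by (intro prod_mono) (auto intro: bound dest: permutes_in_image)
    then show ?thesis by (simp add: abs_mult sign_def)
  qed
  have "\<bar>det A\<bar> \<le> (\<Sum>p | p permutes {0..<n}. \<bar>signof p * (\<Prod>i = 0..<n. A $$ (i, p i))\<bar>)"
    unfolding det_def'[OF A] by (rule sum_abs)
  also have "\<dots> \<le> (\<Sum>p | p permutes {0..<n}. b ^ n)"
    by (intro sum_mono) (simp add: term_bound)
  also have "\<dots> = fact n * b ^ n"
    by (simp add: card_permutations)
  finally show ?thesis .
qed

lemma integrable_normal_one_plus_abs_pow:
  assumes "0 < \<sigma>"
  shows "integrable (density lborel (normal_density 0 \<sigma>)) (\<lambda>x. (1 + \<bar>x\<bar>) ^ k)"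
proof -
  have "integrable lborel (\<lambda>x. \<Sum>i\<le>k. of_nat (k choose i) * (normal_density 0 \<sigma> x * \<bar>x - 0\<bar> ^ i))"
    using integrable_normal_moment_abs[OF assms]
    by (intro Bochner_Integration.integrable_sum integrable_mult_right)
  then have "integrable lborel (\<lambda>x. normal_density 0 \<sigma> x * (\<bar>x\<bar> + 1) ^ k)"
    by (simp add: binomial_ring[of _ 1] sum_distrib_left mult_ac)
  then show ?thesis
    by (subst integrable_density) (auto simp: add.commute)
qed

lemma distr_normal_density_scale:
  assumes "0 < \<sigma>" "0 < c"
  shows "distr (density lborel (normal_density 0 \<sigma>)) (density lborel (normal_density 0 (c * \<sigma>))) ((*) c)
       = density lborel (normal_density 0 (c * \<sigma>))"
proof -
  let ?D = "density lborel (normal_density 0 \<sigma>)"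
  interpret prob_space ?D by (rule prob_space_normal_density[OF assms(1)])
  have "distributed ?D lborel (\<lambda>x. x) (normal_density 0 \<sigma>)"
    by (simp add: distributed_def distr_id2)
  from normal_density_affine[OF this assms(1), of c 0] assms(2)
  have "distributed ?D lborel ((*) c) (normal_density 0 (c * \<sigma>))" by simp
  then have "distr ?D lborel ((*) c) = density lborel (normal_density 0 (c * \<sigma>))"
    by (rule distributed_distr_eq_density)
  then show ?thesis
    by (metis (no_types) distr_cong sets_density)
qed

lemma integral_PiM_normal_scale:
  fixes g :: "('i \<Rightarrow> real) \<Rightarrow> real"
  assumes J: "finite J" and \<sigma>: "\<And>i. i \<in> J \<Longrightarrow> 0 < \<sigma> i" and c: "0 < c"
    and g: "g \<in> borel_measurable (PiM J (\<lambda>i. density lborel (normal_density 0 (c * \<sigma> i))))"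
  shows "(\<integral>w. g w \<partial>PiM J (\<lambda>i. density lborel (normal_density 0 (c * \<sigma> i))))
       = (\<integral>w. g (\<lambda>i\<in>J. c * w i) \<partial>PiM J (\<lambda>i. density lborel (normal_density 0 (\<sigma> i))))"
proof -
  let ?M = "\<lambda>i. density lborel (normal_density 0 (\<sigma> i))"
  let ?M' = "\<lambda>i. density lborel (normal_density 0 (c * \<sigma> i))"
  have scale: "(*) c \<in> measurable (?M i) (?M' i)" for i
    by (simp add: measurable_cong_sets[OF sets_density sets_density])
  have "PiM J ?M' = PiM J (\<lambda>i. distr (?M i) (?M' i) ((*) c))"
    using \<sigma> c by (intro PiM_cong refl distr_normal_density_scale[symmetric])
  also have "\<dots> = distr (PiM J ?M) (PiM J ?M') (compose J ((*) c))"
    using \<sigma> c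
    by (intro distr_PiM_finite_prob_space'[symmetric] J scale prob_space_normal_density mult_pos_pos)
  finally have "(\<integral>w. g w \<partial>PiM J ?M') = (\<integral>w. g w \<partial>distr (PiM J ?M) (PiM J ?M') (compose J ((*) c)))"
    by simp
  also have "\<dots> = (\<integral>w. g (compose J ((*) c) w) \<partial>PiM J ?M)"
  proof (rule integral_distr[OF _ g])
    show "compose J ((*) c) \<in> measurable (PiM J ?M) (PiM J ?M')"
      unfolding compose_def
      by (intro measurable_restrict measurable_compose[OF measurable_component_singleton[of _ J ?M] scale])
  qed
  finally show ?thesis by (simp add: compose_def)
qed

lemma (in product_prob_space) integral_PiM_subset:
  fixes g :: "('i \<Rightarrow> 'a) \<Rightarrow> real"
  assumes JK: "J \<subseteq> K" "finite K" and g: "g \<in> borel_measurable (PiM J M)"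
    and depends: "\<And>w. g (restrict w J) = g w"
  shows "(\<integral>w. g w \<partial>PiM K M) = (\<integral>w. g w \<partial>PiM J M)"
proof -
  have "(\<integral>w. g w \<partial>PiM J M) = (\<integral>w. g w \<partial>distr (PiM K M) (PiM J M) (\<lambda>w. restrict w J))"
    by (simp flip: distr_restrict[OF JK])
  also have "\<dots> = (\<integral>w. g (restrict w J) \<partial>PiM K M)"
    by (rule integral_distr[OF measurable_restrict_subset[OF JK(1)] g])
  finally show ?thesis by (simp add: depends)
qed

definition goe_sd :: "nat \<Rightarrow> nat \<times> nat \<Rightarrow> real" where
  "goe_sd n ij = (if fst ij = snd ij then sqrt (2 / real n) else sqrt (1 / real n))"

definition goe_entry :: "nat \<Rightarrow> nat \<times> nat \<Rightarrow> real measure" where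
  "goe_entry n ij = density lborel (normal_density 0 (goe_sd n ij))"

lemma goe_eq_PiM: "goe n = PiM (goe_index n) (goe_entry n)"
  unfolding goe_def goe_entry_def goe_sd_def ..

lemma sets_goe_entry [simp]: "sets (goe_entry n ij) = sets borel"
  by (simp add: goe_entry_def)

lemma goe_sd_pos: "0 < n \<Longrightarrow> 0 < goe_sd n ij"
  by (simp add: goe_sd_def)

lemma goe_sd_rescale: "0 < m \<Longrightarrow> 0 < n \<Longrightarrow> sqrt (real m / real n) * goe_sd m ij = goe_sd n ij"
  by (auto simp: goe_sd_def simp flip: real_sqrt_mult)

lemma product_prob_space_goe_entry: "0 < n \<Longrightarrow> product_prob_space (goe_entry n)"
  unfolding goe_entry_def
  by (intro product_prob_spaceI prob_space_normal_density goe_sd_pos)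

lemma finite_goe_index: "finite (goe_index n)"
  by (rule finite_subset[of _ "{..<n} \<times> {..<n}"]) (auto simp: goe_index_def)

lemma goe_index_mono: "m \<le> n \<Longrightarrow> goe_index m \<subseteq> goe_index n"
  by (auto simp: goe_index_def)

lemma goe_mat_restrict: "goe_mat m (restrict w (goe_index m)) = goe_mat m w"
  by (intro eq_matI) (auto simp: goe_mat_def goe_index_def)

lemma borel_measurable_det_goe_mat:
  assumes "goe_index m \<subseteq> I" "\<And>ij. ij \<in> I \<Longrightarrow> sets (M ij) = sets borel"
  shows "(\<lambda>w. det (goe_mat m w + t \<cdot>\<^sub>m 1\<^sub>m m)) \<in> borel_measurable (PiM I M)"
proof -
  have entry: "(\<lambda>w. w ij) \<in> borel_measurable (PiM I M)" if "ij \<in> goe_index m" for ij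
  proof -
    have ij: "ij \<in> I" using that assms(1) by blast
    show ?thesis
      using measurable_component_singleton[OF ij, of M]
      by (simp add: measurable_cong_sets[OF refl assms(2)[OF ij]])
  qed
  have carrier: "goe_mat m w + t \<cdot>\<^sub>m 1\<^sub>m m \<in> carrier_mat m m" for w
    by (simp add: goe_mat_def)
  show ?thesis
    unfolding det_def'[OF carrier]
    by (intro borel_measurable_sum borel_measurable_times borel_measurable_const
        borel_measurable_prod borel_measurable_add)
      (auto simp: goe_mat_def goe_index_def intro!: entry borel_measurable_add dest: permutes_in_image)
qed

lemma abs_det_goe_mat_le:
  assumes I: "goe_index m \<subseteq> I" "finite I"
  shows "\<bar>det (goe_mat m w + t \<cdot>\<^sub>m 1\<^sub>m m)\<bar> \<le> fact m * (1 + \<bar>t\<bar>) ^ m * (\<Prod>j\<in>I. (1 + \<bar>w j\<bar>) ^ m)"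
proof -
  define P where "P = (\<Prod>j\<in>I. 1 + \<bar>w j\<bar>)"
  have P_ge_1: "1 \<le> P" unfolding P_def by (rule prod_ge_1) auto
  have coord_le: "\<bar>w j\<bar> \<le> P" if "j \<in> I" for j
  proof -
    have "(1 + \<bar>w j\<bar>) * 1 \<le> (1 + \<bar>w j\<bar>) * (\<Prod>j\<in>I - {j}. 1 + \<bar>w j\<bar>)"
      by (intro mult_left_mono prod_ge_1) auto
    then show ?thesis using that I(2) by (simp add: P_def prod.remove)
  qed
  have "\<bar>(goe_mat m w + t \<cdot>\<^sub>m 1\<^sub>m m) $$ (i, j)\<bar> \<le> (1 + \<bar>t\<bar>) * P" if "i < m" "j < m" for i j
  proof -
    have "(min i j, max i j) \<in> I" using that I(1) by (auto simp: goe_index_def)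
    then have "\<bar>w (min i j, max i j)\<bar> \<le> P" by (rule coord_le)
    then have "\<bar>(goe_mat m w + t \<cdot>\<^sub>m 1\<^sub>m m) $$ (i, j)\<bar> \<le> P + \<bar>t\<bar>"
      using that abs_triangle_ineq[of "w (min i j, max i j)" t]
      by (auto simp: goe_mat_def intro: add_increasing2)
    also have "\<dots> \<le> (1 + \<bar>t\<bar>) * P"
      using mult_left_mono[OF P_ge_1, of "\<bar>t\<bar>"] by (simp add: algebra_simps)
    finally show ?thesis .
  qed
  then have "\<bar>det (goe_mat m w + t \<cdot>\<^sub>m 1\<^sub>m m)\<bar> \<le> fact m * ((1 + \<bar>t\<bar>) * P) ^ m"
    by (intro abs_det_le_fact_mult_pow) (auto simp: goe_mat_def)
  then show ?thesis
    by (simp add: P_def power_mult_distrib prod_power_distrib mult.assoc)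
qed

lemma integrable_det_goe_mat:
  assumes I: "goe_index m \<subseteq> I" "finite I" and n: "0 < n"
  shows "integrable (PiM I (goe_entry n)) (\<lambda>w. det (goe_mat m w + t \<cdot>\<^sub>m 1\<^sub>m m))"
proof -
  interpret product_prob_space "goe_entry n" by (rule product_prob_space_goe_entry[OF n])
  have "integrable (PiM I (goe_entry n)) (\<lambda>w. \<Prod>j\<in>I. (1 + \<bar>w j\<bar>) ^ m)"
    using n by (intro product_integrable_prod I(2))
      (simp add: goe_entry_def integrable_normal_one_plus_abs_pow goe_sd_pos)
  then have "integrable (PiM I (goe_entry n))
      (\<lambda>w. fact m * (1 + \<bar>t\<bar>) ^ m * (\<Prod>j\<in>I. (1 + \<bar>w j\<bar>) ^ m))"
    by simp
  then show ?thesis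
    by (rule Bochner_Integration.integrable_bound)
      (auto intro!: AE_I2 borel_measurable_det_goe_mat[OF I(1)] abs_det_goe_mat_le[OF I]
        simp: abs_mult abs_prod)
qed

lemma integral_det_goe_mat_leading_block:
  assumes m: "0 < m" and mn: "m \<le> n"
  defines "c \<equiv> sqrt (real m / real n)"
  shows "(\<integral>w. det (goe_mat m w + t \<cdot>\<^sub>m 1\<^sub>m m) \<partial>goe n)
       = c ^ m * (\<integral>w. det (goe_mat m w + (t / c) \<cdot>\<^sub>m 1\<^sub>m m) \<partial>goe m)"
proof -
  have n: "0 < n" using m mn by simp
  have c: "0 < c" using m n by (simp add: c_def)
  interpret product_prob_space "goe_entry n" by (rule product_prob_space_goe_entry[OF n])
  let ?J = "goe_index m"
  have entry_n: "goe_entry n = (\<lambda>ij. density lborel (normal_density 0 (c * goe_sd m ij)))"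
    unfolding c_def goe_sd_rescale[OF m n] goe_entry_def ..
  have scaled: "goe_mat m (\<lambda>ij\<in>?J. c * w ij) + t \<cdot>\<^sub>m 1\<^sub>m m = c \<cdot>\<^sub>m (goe_mat m w + (t / c) \<cdot>\<^sub>m 1\<^sub>m m)" for w
    using c by (intro eq_matI) (auto simp: goe_mat_def goe_index_def algebra_simps)
  have "(\<integral>w. det (goe_mat m w + t \<cdot>\<^sub>m 1\<^sub>m m) \<partial>goe n)
      = (\<integral>w. det (goe_mat m w + t \<cdot>\<^sub>m 1\<^sub>m m) \<partial>PiM ?J (goe_entry n))"
    unfolding goe_eq_PiM
    by (intro integral_PiM_subset goe_index_mono mn finite_goe_index borel_measurable_det_goe_mat)
      (auto simp: goe_mat_restrict)
  also have "\<dots> = (\<integral>w. det (c \<cdot>\<^sub>m (goe_mat m w + (t / c) \<cdot>\<^sub>m 1\<^sub>m m)) \<partial>goe m)"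
    unfolding entry_n goe_eq_PiM goe_entry_def scaled[symmetric]
    using m by (intro integral_PiM_normal_scale finite_goe_index goe_sd_pos c borel_measurable_det_goe_mat)
      auto
  also have "\<dots> = c ^ m * (\<integral>w. det (goe_mat m w + (t / c) \<cdot>\<^sub>m 1\<^sub>m m) \<partial>goe m)"
    by (simp add: goe_mat_def)
  finally show ?thesis .
qed

lemma det_goe_mat_minus_corner:
  fixes m :: nat
  defines "n \<equiv> Suc m"
  shows "det (goe_mat n w - f \<cdot>\<^sub>m (mat_of_cols n [unit_vec n m] * mat_of_rows n [unit_vec n m])
              + s \<cdot>\<^sub>m 1\<^sub>m n)
       = det (goe_mat n w + s \<cdot>\<^sub>m 1\<^sub>m n) - f * det (goe_mat m w + s \<cdot>\<^sub>m 1\<^sub>m m)"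
proof -
  let ?E = "mat_of_cols n [unit_vec n m] * mat_of_rows n [unit_vec n m]"
  have carrier: "goe_mat n w + s \<cdot>\<^sub>m 1\<^sub>m n \<in> carrier_mat n n"
    by (simp add: goe_mat_def)
  have "goe_mat n w - f \<cdot>\<^sub>m ?E + s \<cdot>\<^sub>m 1\<^sub>m n = (goe_mat n w + s \<cdot>\<^sub>m 1\<^sub>m n) - f \<cdot>\<^sub>m ?E"
    by (intro eq_matI) (auto simp: goe_mat_def n_def)
  moreover have "mat_delete (goe_mat n w + s \<cdot>\<^sub>m 1\<^sub>m n) m m = goe_mat m w + s \<cdot>\<^sub>m 1\<^sub>m m"
    by (intro eq_matI) (auto simp: mat_delete_def goe_mat_def n_def)
  ultimately show ?thesis
    using det_minus_smult_unit_outer[OF carrier, of m f] by (simp add: n_def)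
qed

lemma integral_det_goe_mat_minus_corner:
  fixes m :: nat
  assumes m: "0 < m"
  defines "n \<equiv> Suc m" and "c \<equiv> sqrt (real m / real (Suc m))"
  shows "(\<integral>w. det (goe_mat n w - f \<cdot>\<^sub>m (mat_of_cols n [unit_vec n m] * mat_of_rows n [unit_vec n m])
              + s \<cdot>\<^sub>m 1\<^sub>m n) \<partial>goe n)
       = (\<integral>w. det (goe_mat n w + s \<cdot>\<^sub>m 1\<^sub>m n) \<partial>goe n)
         - f * c ^ m * (\<integral>w. det (goe_mat m w + (s / c) \<cdot>\<^sub>m 1\<^sub>m m) \<partial>goe m)"
proof -
  have n: "0 < n" "m \<le> n" by (simp_all add: n_def)
  have integrable: "integrable (goe n) (\<lambda>w. det (goe_mat k w + s \<cdot>\<^sub>m 1\<^sub>m k))" if "k \<le> n" for k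
    unfolding goe_eq_PiM
    by (intro integrable_det_goe_mat goe_index_mono that finite_goe_index n)
  have "(\<integral>w. det (goe_mat n w - f \<cdot>\<^sub>m (mat_of_cols n [unit_vec n m] * mat_of_rows n [unit_vec n m])
              + s \<cdot>\<^sub>m 1\<^sub>m n) \<partial>goe n)
      = (\<integral>w. det (goe_mat n w + s \<cdot>\<^sub>m 1\<^sub>m n) \<partial>goe n)
        - f * (\<integral>w. det (goe_mat m w + s \<cdot>\<^sub>m 1\<^sub>m m) \<partial>goe n)"
    unfolding n_def det_goe_mat_minus_corner
    using integrable[OF order_refl] integrable[OF n(2)] by (simp add: n_def)
  also have "(\<integral>w. det (goe_mat m w + s \<cdot>\<^sub>m 1\<^sub>m m) \<partial>goe n)
      = c ^ m * (\<integral>w. det (goe_mat m w + (s / c) \<cdot>\<^sub>m 1\<^sub>m m) \<partial>goe m)"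
    unfolding c_def n_def by (rule integral_det_goe_mat_leading_block[OF m le_SucI[OF order_refl]])
  finally show ?thesis by (simp add: mult.assoc)
qed

theorem lemmaA6:
  fixes N :: nat and f s :: real
  assumes "N \<ge> 3"
  shows "(\<integral>w. det (goe_mat (N - 1) w
              - f \<cdot>\<^sub>m (mat_of_cols (N - 1) [unit_vec (N - 1) (N - 2)]
                   * mat_of_rows (N - 1) [unit_vec (N - 1) (N - 2)])
              + s \<cdot>\<^sub>m 1\<^sub>m (N - 1)) \<partial>goe (N - 1))
       = (\<integral>w. det (goe_mat (N - 1) w + s \<cdot>\<^sub>m 1\<^sub>m (N - 1)) \<partial>goe (N - 1))
         - f * ((real N - 2) / (real N - 1)) powr ((real N - 2) / 2)
             * (\<integral>w. det (goe_mat (N - 2) w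
                   + (sqrt ((real N - 1) / (real N - 2)) * s) \<cdot>\<^sub>m 1\<^sub>m (N - 2)) \<partial>goe (N - 2))"
proof -
  define m where "m = N - 2"
  have m: "0 < m" and N1: "N - 1 = Suc m" using assms by (simp_all add: m_def)
  have reals: "real N - 1 = real (Suc m)" "real N - 2 = real m"
    using assms by (simp_all add: m_def of_nat_diff)
  define c where "c = sqrt (real m / real (Suc m))"
  have "(real m / real (Suc m)) powr (real m / 2) = c ^ m"
    using m by (simp add: c_def powr_half_sqrt[symmetric] powr_powr flip: powr_realpow)
  moreover have "sqrt (real (Suc m) / real m) * s = s / c"
    using m by (simp add: c_def real_sqrt_divide field_simps)
  ultimately show ?thesis
    unfolding N1 reals m_def[symmetric]
    using integral_det_goe_mat_minus_corner[OF m, of f s] by (simp add: c_def)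
qed

end
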